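(* Let $f : \widehat{\mathbb{Z}} \to \widehat{\mathbb{Z}}$ be congruence preserving and $s \in \widehat{\mathbb{Z}}$. Then $\lambda_f$ is a period map of $f{\Uparrow}_s$.
   Context: $\mathbb{N} = \{1,2,\dots\}$, $\widehat{\mathbb{Z}} = \varprojlim_n \mathbb{Z}/n\mathbb{Z}$; $s \equiv_n t$ means $s-t\in n\widehat{\mathbb{Z}}$; $\widehat{\cdot}:\mathbb{N}\to\widehat{\mathbb{Z}}$ is the natural embedding. For continuous $g:\widehat{\mathbb{Z}}\to\widehat{\mathbb{Z}}$, a map $P:\mathbb{N}\to\mathbb{N}$ is a period map of $g$ if $s \equiv_{P(n)} t$ implies $g(s)\equiv_n g(t)$ for all $s,t,n$. A continuous $f$ is congruence preserving if the identity of $\mathbb{N}$ is a period map of $f$; then $f$ induces self-maps $f_n:\mathbb{Z}/n\mathbb{Z}\to\mathbb{Z}/n\mathbb{Z}$, and $\lambda_f(n)$ denotes the period of $f_n$, i.e. the least common multiple over $y \in \mathbb{Z}/n\mathbb{Z}$ of the cycle length of $y$ (the least $l \ge 1$ with $f_n^k(y) = f_n^{k+l}(y)$ for some $k \ge 0$). For such $f$ and $x \in \widehat{\mathbb{Z}}$, $f{\Uparrow}_x:\widehat{\mathbb{Z}}\to\widehat{\mathbb{Z}}$ is defined by $f{\Uparrow}_x(s) = \lim_{i\to\infty} f^{n_i}(x)$ for any sequence of positive integers $n_i \to +\infty$ in $\mathbb{R}$ with $\widehat{n_i}\to s$ in $\widehat{\mathbb{Z}}$ (this limit exists and is independent of the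 sequence for congruence preserving $f$). *)

theory Defs
  imports Complex_Main
begin

text \<open>An element of the profinite completion of the integers is a compatible family
  of residues: its component at n > 0 lies in {0..<n} (a representative of Z/nZ), and
  components at m dvd n are compatible. The component at 0 is unused and fixed to 0.\<close>

typedef zhat = "{x :: nat \<Rightarrow> int. x 0 = 0 \<and> (\<forall>n>0. 0 \<le> x n \<and> x n < int n)
                 \<and> (\<forall>m n. 0 < m \<longrightarrow> 0 < n \<longrightarrow> m dvd n \<longrightarrow> x n mod int m = x m)}"
  by (rule exI[of _ "\<lambda>_. 0"]) simp

definition zres :: "nat \<Rightarrow> zhat \<Rightarrow> int" where
  "zres n s = Rep_zhat s n"

definition zsub :: "zhat \<Rightarrow> zhat \<Rightarrow> zhat" where
  "zsub s t = Abs_zhat (\<lambda>k. if k = 0 then 0 else (Rep_zhat s k - Rep_zhat t k) mod int k)"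

definition zmul :: "zhat \<Rightarrow> zhat \<Rightarrow> zhat" where
  "zmul s t = Abs_zhat (\<lambda>k. if k = 0 then 0 else (Rep_zhat s k * Rep_zhat t k) mod int k)"

definition zemb :: "nat \<Rightarrow> zhat" where
  "zemb a = Abs_zhat (\<lambda>k. if k = 0 then 0 else int a mod int k)"

definition zcong :: "nat \<Rightarrow> zhat \<Rightarrow> zhat \<Rightarrow> bool" where
  "zcong n s t \<longleftrightarrow> (\<exists>u. zsub s t = zmul (zemb n) u)"

instantiation zhat :: topological_space
begin

definition open_zhat :: "zhat set \<Rightarrow> bool" where
  "open_zhat U \<longleftrightarrow> (\<forall>x\<in>U. \<exists>n>0. \<forall>y. zres n y = zres n x \<longrightarrow> y \<in> U)"

lemma zres_compat:
  assumes "0 < m" "0 < n" "m dvd n" "zres n y = zres n x"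
  shows "zres m y = zres m x"
proof -
  have "\<And>z. zres n z mod int m = zres m z"
    using Rep_zhat assms(1-3) unfolding zres_def by blast
  then show ?thesis using assms(4) by metis
qed

instance
proof
  show "open (UNIV :: zhat set)" unfolding open_zhat_def
    by (intro ballI exI[of _ "1::nat"]) simp
next
  fix S T :: "zhat set"
  assume S: "open S" and T: "open T"
  show "open (S \<inter> T)" unfolding open_zhat_def
  proof
    fix x assume x: "x \<in> S \<inter> T"
    obtain a where a: "a > 0" "\<And>y. zres a y = zres a x \<Longrightarrow> y \<in> S"
      using S x unfolding open_zhat_def by blast
    obtain b where b: "b > 0" "\<And>y. zres b y = zres b x \<Longrightarrow> y \<in> T"
      using T x unfolding open_zhat_def by blast
    have ab: "a * b > 0" using a b by simp
    have "y \<in> S \<inter> T" if "zres (a*b) y = zres (a*b) x" for y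
    proof -
      have "zres a y = zres a x"
        by (rule zres_compat[OF a(1) ab _ that]) simp
      moreover have "zres b y = zres b x"
        by (rule zres_compat[OF b(1) ab _ that]) simp
      ultimately show ?thesis using a(2) b(2) by blast
    qed
    then show "\<exists>n>0. \<forall>y. zres n y = zres n x \<longrightarrow> y \<in> S \<inter> T"
      using ab by blast
  qed
next
  fix K :: "zhat set set"
  assume K: "\<forall>S\<in>K. open S"
  show "open (\<Union>K)" unfolding open_zhat_def
  proof
    fix x assume "x \<in> \<Union>K"
    then obtain S where "S \<in> K" "x \<in> S" by blast
    then obtain n where "n > 0" "\<forall>y. zres n y = zres n x \<longrightarrow> y \<in> S"
      using K unfolding open_zhat_def by blast
    then show "\<exists>n>0. \<forall>y. zres n y = zres n x \<longrightarrow> y \<in> \<Union>K"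
      using \<open>S \<in> K\<close> by blast
  qed
qed

end

definition period_map :: "(nat \<Rightarrow> nat) \<Rightarrow> (zhat \<Rightarrow> zhat) \<Rightarrow> bool" where
  "period_map P g \<longleftrightarrow> (\<forall>n>0. P n > 0) \<and>
     (\<forall>s t n. n > 0 \<longrightarrow> zcong (P n) s t \<longrightarrow> zcong n (g s) (g t))"

definition congruence_preserving :: "(zhat \<Rightarrow> zhat) \<Rightarrow> bool" where
  "congruence_preserving f \<longleftrightarrow> continuous_on UNIV f \<and> period_map id f"

definition induced :: "(zhat \<Rightarrow> zhat) \<Rightarrow> nat \<Rightarrow> int \<Rightarrow> int" where
  "induced f n y = zres n (f (zemb (nat y)))"

definition cycle_length :: "(zhat \<Rightarrow> zhat) \<Rightarrow> nat \<Rightarrow> int \<Rightarrow> nat" where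
  "cycle_length f n y =
     (LEAST l. l \<ge> 1 \<and> (\<exists>k. (induced f n ^^ k) y = (induced f n ^^ (k + l)) y))"

definition lambda_f :: "(zhat \<Rightarrow> zhat) \<Rightarrow> nat \<Rightarrow> nat" where
  "lambda_f f n = Lcm (cycle_length f n ` {0..<int n})"

definition uparrow :: "(zhat \<Rightarrow> zhat) \<Rightarrow> zhat \<Rightarrow> zhat \<Rightarrow> zhat" where
  "uparrow f x s = (THE L. \<forall>ns :: nat \<Rightarrow> nat. (\<forall>i. ns i > 0) \<longrightarrow>
       filterlim ns at_top sequentially \<longrightarrow> (\<lambda>i. zemb (ns i)) \<longlonglongrightarrow> s \<longrightarrow>
       (\<lambda>i. (f ^^ ns i) x) \<longlonglongrightarrow> L)"

end

theory Submission
  imports Defs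
begin

(* Since f preserves congruences, f^a(x) mod n = f_n^a(x mod n), and the orbit of x mod n
   under f_n is eventually periodic with a period dividing lambda_f(n). So for large a the
   residue f^a(x) mod n only depends on a mod lambda_f(n). If n_i tends to infinity and to s
   in Zhat, then eventually n_i mod lambda_f(n) = s mod lambda_f(n); hence f^{n_i}(x) mod n is
   eventually constant, f{\Uparrow}_x(s) exists, and its residue mod n only depends on
   s mod lambda_f(n). *)

lemma zres_nonneg: "0 < n \<Longrightarrow> 0 \<le> zres n x"
  unfolding zres_def using Rep_zhat by blast

lemma zres_less: "0 < n \<Longrightarrow> zres n x < int n"
  unfolding zres_def using Rep_zhat by blast

lemma zres_mod: "0 < m \<Longrightarrow> 0 < n \<Longrightarrow> m dvd n \<Longrightarrow> zres n x mod int m = zres m x"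
  unfolding zres_def using Rep_zhat by blast

lemma zres_diff_mod:
  assumes "0 < m" "0 < n" "m dvd n"
  shows "(zres n a - zres n b) mod int m = (zres m a - zres m b) mod int m"
  by (metis mod_diff_eq zres_mod[OF assms])

lemma zhat_eqI:
  assumes "\<And>n. 0 < n \<Longrightarrow> zres n x = zres n y"
  shows "x = y"
proof -
  have "Rep_zhat x n = Rep_zhat y n" for n
    using assms[of n] Rep_zhat[of x] Rep_zhat[of y] by (cases "n = 0") (auto simp: zres_def)
  then show ?thesis
    by (metis Rep_zhat_inverse ext)
qed

lemma zres_Abs_zhat:
  fixes g :: "nat \<Rightarrow> int"
  assumes compat: "\<And>m n. 0 < m \<Longrightarrow> 0 < n \<Longrightarrow> m dvd n \<Longrightarrow> g n mod int m = g m mod int m"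
    and "0 < k"
  shows "zres k (Abs_zhat (\<lambda>k. if k = 0 then 0 else g k mod int k)) = g k mod int k"
proof -
  have "Rep_zhat (Abs_zhat (\<lambda>k. if k = 0 then 0 else g k mod int k)) =
          (\<lambda>k. if k = 0 then 0 else g k mod int k)"
  proof (rule Abs_zhat_inverse, safe)
    fix m n :: nat
    assume mn: "0 < m" "0 < n" "m dvd n"
    then have "g n mod int n mod int m = g n mod int m"
      by (simp add: mod_mod_cancel)
    then show "(if n = 0 then 0 else g n mod int n) mod int m = (if m = 0 then 0 else g m mod int m)"
      using mn compat[OF mn] by simp
  qed simp_all
  then show ?thesis
    using \<open>0 < k\<close> by (simp add: zres_def)
qed

lemma ex_zhat_residues:
  fixes g :: "nat \<Rightarrow> int"
  assumes "\<And>m n. 0 < m \<Longrightarrow> 0 < n \<Longrightarrow> m dvd n \<Longrightarrow> g n mod int m = g m mod int m"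
  shows "\<exists>x. \<forall>k>0. zres k x = g k mod int k"
  using zres_Abs_zhat[OF assms] by blast

lemma zres_zsub:
  assumes "0 < k"
  shows "zres k (zsub a b) = (zres k a - zres k b) mod int k"
proof -
  have "zsub a b = Abs_zhat (\<lambda>k. if k = 0 then 0 else (zres k a - zres k b) mod int k)"
    unfolding zsub_def zres_def ..
  then show ?thesis
    using zres_Abs_zhat[of "\<lambda>k. zres k a - zres k b", OF zres_diff_mod assms] by simp
qed

lemma zres_zmul:
  assumes "0 < k"
  shows "zres k (zmul a b) = (zres k a * zres k b) mod int k"
proof -
  have compat: "(zres n a * zres n b) mod int m = (zres m a * zres m b) mod int m"
    if "0 < m" "0 < n" "m dvd n" for m n
    by (metis mod_mult_eq zres_mod[OF that])
  have "zmul a b = Abs_zhat (\<lambda>k. if k = 0 then 0 else (zres k a * zres k b) mod int k)"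
    unfolding zmul_def zres_def ..
  then show ?thesis
    using zres_Abs_zhat[of "\<lambda>k. zres k a * zres k b", OF compat assms] by simp
qed

lemma zres_zemb:
  assumes "0 < k"
  shows "zres k (zemb a) = int (a mod k)"
  using zres_Abs_zhat[of "\<lambda>_. int a", OF _ assms]
  by (simp add: zemb_def mod_mod_cancel zmod_int)

lemma zres_mod_self: "0 < n \<Longrightarrow> zres n x mod int n = zres n x"
  by (simp add: zres_mod)

lemma zcong_imp_zres_eq:
  assumes n: "0 < n" and "zcong n a b"
  shows "zres n a = zres n b"
proof -
  obtain u where "zsub a b = zmul (zemb n) u"
    using \<open>zcong n a b\<close> unfolding zcong_def by blast
  then have "(zres n a - zres n b) mod int n = 0"
    using zres_zsub[OF n, of a b] zres_zmul[OF n, of "zemb n" u] by (simp add: zres_zemb[OF n])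
  then have "zres n a mod int n = zres n b mod int n"
    by (simp add: mod_eq_dvd_iff dvd_eq_mod_eq_0)
  then show ?thesis
    by (simp add: zres_mod_self[OF n])
qed

lemma zres_eq_imp_zcong:
  assumes n: "0 < n" and eq: "zres n a = zres n b"
  shows "zcong n a b"
proof -
  define d where "d k = zres (n * k) a - zres (n * k) b" for k
  have d_mod: "d k mod int m = (zres m a - zres m b) mod int m"
    if "0 < m" "0 < k" "m dvd n * k" for m k
    unfolding d_def using that n by (intro zres_diff_mod) simp_all
  have n_dvd_d: "int n dvd d k" if "0 < k" for k
    using d_mod[of n k] eq n that by (simp add: dvd_eq_mod_eq_0)
  (* u = (a - b)/n is assembled levelwise: its residue mod k is e(k) = d(k)/n, where d(k) is
     a - b computed modulo n k. *)
  define e where "e k = d k div int n" for k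
  have d_eq: "d k = int n * e k" if "0 < k" for k
    using n_dvd_d[OF that] by (simp add: e_def)
  have e_compat: "e k mod int m = e m mod int m" if m: "0 < m" "0 < k" "m dvd k" for m k
  proof -
    have "d k mod int (n * m) = d m mod int (n * m)"
      using d_mod[of "n * m" k] d_mod[of "n * m" m] n m by (simp add: mult_dvd_mono)
    then have "(int n * e k) mod (int n * int m) = (int n * e m) mod (int n * int m)"
      using d_eq m by simp
    then have "int n * (e k mod int m) = int n * (e m mod int m)"
      by (simp only: mult_mod_right)
    then show ?thesis
      using n by simp
  qed
  obtain u where u: "\<And>k. 0 < k \<Longrightarrow> zres k u = e k mod int k"
    using ex_zhat_residues[of e, OF e_compat] by blast
  have "zsub a b = zmul (zemb n) u"
  proof (rule zhat_eqI)
    fix k :: nat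
    assume k: "0 < k"
    have "zres k (zmul (zemb n) u) = (int n mod int k * (e k mod int k)) mod int k"
      using k by (simp add: zres_zmul zres_zemb u zmod_int)
    also have "\<dots> = d k mod int k"
      using d_eq[OF k] by (simp only: mod_mult_eq)
    also have "\<dots> = zres k (zsub a b)"
      using d_mod[of k k] k n by (simp add: zres_zsub)
    finally show "zres k (zsub a b) = zres k (zmul (zemb n) u)" ..
  qed
  then show ?thesis
    unfolding zcong_def by blast
qed

lemma zcong_iff: "0 < n \<Longrightarrow> zcong n a b \<longleftrightarrow> zres n a = zres n b"
  using zcong_imp_zres_eq zres_eq_imp_zcong by blast

lemma open_zres_fibre: "0 < n \<Longrightarrow> open {y. zres n y = c}"
  unfolding open_zhat_def by auto

instance zhat :: t2_space
proof
  fix x y :: zhat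
  assume "x \<noteq> y"
  then obtain n where n: "0 < n" "zres n x \<noteq> zres n y"
    using zhat_eqI by blast
  then show "\<exists>U V. open U \<and> open V \<and> x \<in> U \<and> y \<in> V \<and> U \<inter> V = {}"
    by (intro exI[of _ "{z. zres n z = zres n x}"] exI[of _ "{z. zres n z = zres n y}"] conjI)
      (auto intro: open_zres_fibre)
qed

lemma tendsto_zhat_iff:
  "(X \<longlongrightarrow> L) F \<longleftrightarrow> (\<forall>n>0. eventually (\<lambda>i. zres n (X i) = zres n L) F)"
proof
  assume lim: "(X \<longlongrightarrow> L) F"
  show "\<forall>n>0. eventually (\<lambda>i. zres n (X i) = zres n L) F"
  proof (intro allI impI)
    fix n :: nat
    assume "0 < n"
    from topological_tendstoD[OF lim open_zres_fibre[OF this]]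
    show "eventually (\<lambda>i. zres n (X i) = zres n L) F"
      by simp
  qed
next
  assume residues: "\<forall>n>0. eventually (\<lambda>i. zres n (X i) = zres n L) F"
  show "(X \<longlongrightarrow> L) F"
  proof (rule topological_tendstoI)
    fix S
    assume "open S" "L \<in> S"
    then obtain n where "0 < n" and fibre: "\<And>y. zres n y = zres n L \<Longrightarrow> y \<in> S"
      unfolding open_zhat_def by blast
    then have "eventually (\<lambda>i. zres n (X i) = zres n L) F"
      using residues by blast
    then show "eventually (\<lambda>i. X i \<in> S) F"
      by (rule eventually_mono) (rule fibre)
  qed
qed

lemma ex_limit_of_eventual_residues:
  fixes X :: "nat \<Rightarrow> zhat"
  assumes "\<And>n. 0 < n \<Longrightarrow> eventually (\<lambda>i. zres n (X i) = v n) sequentially"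
  shows "\<exists>L. \<forall>n>0. zres n L = v n"
proof -
  have v: "v n mod int m = v m" if mn: "0 < m" "0 < n" "m dvd n" for m n
  proof -
    obtain i where "zres n (X i) = v n \<and> zres m (X i) = v m"
      using eventually_happens'[OF sequentially_bot eventually_conj[OF assms[OF mn(2)] assms[OF mn(1)]]]
      by blast
    then show ?thesis
      using zres_mod[OF mn, of "X i"] by simp
  qed
  have v_self: "v m mod int m = v m" if "0 < m" for m
    using v[OF that that] by simp
  have "v n mod int m = v m mod int m" if "0 < m" "0 < n" "m dvd n" for m n
    using v[OF that] v_self[OF that(1)] by simp
  then obtain L where "\<And>k. 0 < k \<Longrightarrow> zres k L = v k mod int k"
    using ex_zhat_residues[of v] by blast
  then show ?thesis
    using v_self by auto
qed

lemma nat_seq_tendsto_zhat: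
  obtains c :: "nat \<Rightarrow> nat"
  where "\<And>i. 0 < c i" "filterlim c at_top sequentially" "(\<lambda>i. zemb (c i)) \<longlonglongrightarrow> t"
proof -
  define c where "c i = nat (zres (fact i) t) + fact i" for i :: nat
  have fact_pos: "(0::nat) < fact i" for i
    by simp
  have c_ge: "i \<le> c i" and c_pos: "0 < c i" for i
    using fact_ge_self[of i] fact_pos[of i] by (simp_all add: c_def)
  then have "filterlim c at_top sequentially"
    by (intro filterlim_at_top_mono[OF filterlim_ident] always_eventually) blast
  moreover have "zres n (zemb (c i)) = zres n t" if n: "0 < n" "n \<le> i" for n i
  proof -
    have dvd: "n dvd fact i"
      using n by (simp add: dvd_fact)
    then obtain q where q: "fact i = n * q" ..
    have "zres n (zemb (c i)) = (zres (fact i) t + int n * int q) mod int n"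
      using n zres_nonneg[OF fact_pos, of i t] by (simp add: zres_zemb c_def zmod_int q)
    also have "\<dots> = zres (fact i) t mod int n"
      by (rule mod_mult_self2)
    also have "\<dots> = zres n t"
      by (rule zres_mod[OF n(1) fact_pos dvd])
    finally show ?thesis .
  qed
  then have "(\<lambda>i. zemb (c i)) \<longlonglongrightarrow> t"
    unfolding tendsto_zhat_iff eventually_sequentially by blast
  ultimately show ?thesis
    using that c_pos by blast
qed

lemma funpow_cycle_exists:
  fixes g :: "'a \<Rightarrow> 'a"
  assumes "finite (range g)"
  shows "\<exists>l. l \<ge> 1 \<and> (\<exists>k. (g ^^ k) y = (g ^^ (k + l)) y)"
proof -
  have "(g ^^ i) y \<in> insert y (range g)" for i
    by (cases i) auto
  then have "range (\<lambda>i. (g ^^ i) y) \<subseteq> insert y (range g)"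
    by blast
  then have "\<not> inj (\<lambda>i. (g ^^ i) y)"
    using assms finite_subset[of _ "insert y (range g)"] finite_imageD infinite_UNIV_nat by blast
  then obtain i j where "i < j" "(g ^^ i) y = (g ^^ j) y"
    unfolding inj_def by (metis linorder_neqE_nat)
  then show ?thesis
    by (intro exI[of _ "j - i"] conjI exI[of _ i]) simp_all
qed

lemma funpow_add_mult_period:
  fixes g :: "'a \<Rightarrow> 'a"
  assumes "(g ^^ k) y = (g ^^ (k + l)) y" "k \<le> a"
  shows "(g ^^ (a + q * l)) y = (g ^^ a) y"
proof -
  have "(g ^^ l) ((g ^^ k) y) = (g ^^ (k + l)) y"
    by (simp only: add.commute[of k l] funpow_add comp_apply)
  also have "\<dots> = (g ^^ k) y"
    by (rule assms(1)[symmetric])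
  finally have "(g ^^ l) ((g ^^ k) y) = (g ^^ k) y" .
  then have "(g ^^ (q * l)) ((g ^^ k) y) = (g ^^ k) y"
    using funpow_mod_eq[where f = g and n = l and m = "q * l"] by simp
  then have periodic: "(g ^^ (q * l + k)) y = (g ^^ k) y"
    by (simp add: funpow_add)
  have "a + q * l = (a - k) + (q * l + k)" and a: "a = (a - k) + k"
    using assms(2) by simp_all
  then have "(g ^^ (a + q * l)) y = (g ^^ (a - k)) ((g ^^ (q * l + k)) y)"
    by (simp only: funpow_add comp_apply)
  also have "\<dots> = (g ^^ (a - k)) ((g ^^ k) y)"
    by (simp only: periodic)
  also have "\<dots> = (g ^^ a) y"
    by (subst (2) a) (simp only: funpow_add comp_apply)
  finally show ?thesis .
qed

lemma funpow_eq_if_mod_eq: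
  fixes g :: "'a \<Rightarrow> 'a"
  assumes "(g ^^ k) y = (g ^^ (k + l)) y" "k \<le> a" "k \<le> b" "a mod l = b mod l"
  shows "(g ^^ a) y = (g ^^ b) y"
proof (cases "a \<le> b")
  case True
  then obtain q where "b = a + l * q"
    using mod_eq_nat1E[OF assms(4)[symmetric]] by blast
  then show ?thesis
    using funpow_add_mult_period[OF assms(1,2), of q] by (simp add: mult.commute)
next
  case False
  then obtain q where "a = b + l * q"
    using mod_eq_nat1E[OF assms(4)] by fastforce
  then show ?thesis
    using funpow_add_mult_period[OF assms(1,3), of q] by (simp add: mult.commute)
qed

lemma cycle_length_spec:
  assumes "0 < n"
  shows "cycle_length f n y \<ge> 1"
    and "\<exists>k. (induced f n ^^ k) y = (induced f n ^^ (k + cycle_length f n y)) y"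
proof -
  have "range (induced f n) \<subseteq> {0..<int n}"
    using zres_nonneg[OF assms] zres_less[OF assms] by (auto simp: induced_def)
  then have "finite (range (induced f n))"
    using finite_subset by blast
  from LeastI_ex[OF funpow_cycle_exists[OF this]]
  show "cycle_length f n y \<ge> 1"
    and "\<exists>k. (induced f n ^^ k) y = (induced f n ^^ (k + cycle_length f n y)) y"
    unfolding cycle_length_def by blast+
qed

lemma lambda_f_pos:
  assumes "0 < n"
  shows "0 < lambda_f f n"
proof -
  have "0 \<notin> cycle_length f n ` {0..<int n}"
    using cycle_length_spec(1)[OF assms, of f] by (metis imageE not_one_le_zero)
  then have "lambda_f f n \<noteq> 0"
    unfolding lambda_f_def by (simp add: Lcm_0_iff)
  then show ?thesis
    by simp
qed

lemma induced_funpow_lambda_f: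
  assumes "0 < n" "y \<in> {0..<int n}"
  shows "\<exists>k. (induced f n ^^ k) y = (induced f n ^^ (k + lambda_f f n)) y"
proof -
  obtain k where k: "(induced f n ^^ k) y = (induced f n ^^ (k + cycle_length f n y)) y"
    using cycle_length_spec(2)[OF assms(1)] by blast
  obtain q where "lambda_f f n = q * cycle_length f n y"
    using dvd_Lcm[OF imageI[OF assms(2)], of "cycle_length f n"]
    unfolding lambda_f_def by (metis dvdE mult.commute)
  then have "(induced f n ^^ k) y = (induced f n ^^ (k + lambda_f f n)) y"
    using funpow_add_mult_period[OF k order.refl, of q] by simp
  then show ?thesis ..
qed

lemma congruence_preserving_zres:
  assumes "congruence_preserving f" "0 < n" "zres n a = zres n b"
  shows "zres n (f a) = zres n (f b)"
proof -
  have "zcong n (f a) (f b)"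
    using assms(1,2) zres_eq_imp_zcong[OF assms(2,3)]
    unfolding congruence_preserving_def period_map_def by simp
  then show ?thesis
    using zcong_imp_zres_eq[OF assms(2)] by blast
qed

lemma zres_funpow:
  assumes cp: "congruence_preserving f" and n: "0 < n"
  shows "zres n ((f ^^ a) x) = (induced f n ^^ a) (zres n x)"
proof (induction a)
  case 0
  then show ?case
    by simp
next
  case (Suc a)
  have "zres n (zemb (nat (zres n ((f ^^ a) x)))) = zres n ((f ^^ a) x)"
    using zres_nonneg[OF n] zres_mod_self[OF n] by (simp add: zres_zemb[OF n] zmod_int)
  then have "zres n ((f ^^ Suc a) x) = induced f n (zres n ((f ^^ a) x))"
    unfolding induced_def funpow.simps comp_apply by (rule congruence_preserving_zres[OF cp n, symmetric])
  then show ?case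
    using Suc by simp
qed

lemma zres_funpow_eventually_periodic:
  assumes cp: "congruence_preserving f" and n: "0 < n"
  obtains k where "\<And>a b. k \<le> a \<Longrightarrow> k \<le> b \<Longrightarrow> a mod lambda_f f n = b mod lambda_f f n \<Longrightarrow>
    zres n ((f ^^ a) x) = zres n ((f ^^ b) x)"
proof -
  have "zres n x \<in> {0..<int n}"
    using zres_nonneg[OF n] zres_less[OF n] by simp
  then obtain k
    where k: "(induced f n ^^ k) (zres n x) = (induced f n ^^ (k + lambda_f f n)) (zres n x)"
    using induced_funpow_lambda_f[OF n] by blast
  show thesis
  proof (rule that)
    fix a b
    assume "k \<le> a" "k \<le> b" "a mod lambda_f f n = b mod lambda_f f n"
    then show "zres n ((f ^^ a) x) = zres n ((f ^^ b) x)"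
      unfolding zres_funpow[OF cp n] by (rule funpow_eq_if_mod_eq[OF k])
  qed
qed

lemma eventually_mod_eq_zres:
  assumes "(\<lambda>i. zemb (ns i)) \<longlonglongrightarrow> t" "0 < m"
  shows "eventually (\<lambda>i. int (ns i mod m) = zres m t) sequentially"
proof -
  have "eventually (\<lambda>i. zres m (zemb (ns i)) = zres m t) sequentially"
    using assms unfolding tendsto_zhat_iff by blast
  then show ?thesis
    by (simp add: zres_zemb[OF assms(2)])
qed

lemma zres_funpow_eventually_const:
  assumes cp: "congruence_preserving f" and n: "0 < n"
  obtains r where "\<And>ns t. filterlim ns at_top sequentially \<Longrightarrow> (\<lambda>i. zemb (ns i)) \<longlonglongrightarrow> t \<Longrightarrow>
    zres (lambda_f f n) t = zres (lambda_f f n) t0 \<Longrightarrow>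
    eventually (\<lambda>i. zres n ((f ^^ ns i) x) = r) sequentially"
proof -
  let ?l = "lambda_f f n"
  have l: "0 < ?l"
    using lambda_f_pos[OF n] .
  obtain k where periodic: "\<And>a b. k \<le> a \<Longrightarrow> k \<le> b \<Longrightarrow> a mod ?l = b mod ?l \<Longrightarrow>
      zres n ((f ^^ a) x) = zres n ((f ^^ b) x)"
    using zres_funpow_eventually_periodic[OF cp n] by blast
  define a where "a = k * ?l + nat (zres ?l t0)"
  have a_mod: "int (a mod ?l) = zres ?l t0"
    using zres_nonneg[OF l, of t0] zres_less[OF l, of t0] by (simp add: a_def nat_less_iff)
  have "k \<le> k * ?l"
    using l by simp
  then have "k \<le> a"
    unfolding a_def by linarith
  show thesis
  proof (rule that)
    fix ns t
    assume ns: "filterlim ns at_top sequentially" "(\<lambda>i. zemb (ns i)) \<longlonglongrightarrow> t"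
      and t: "zres ?l t = zres ?l t0"
    have "eventually (\<lambda>i. k \<le> ns i) sequentially"
      using ns(1) unfolding filterlim_at_top by blast
    then have "eventually (\<lambda>i. k \<le> ns i \<and> int (ns i mod ?l) = zres ?l t) sequentially"
      using eventually_mod_eq_zres[OF ns(2) l] by (rule eventually_conj)
    then show "eventually (\<lambda>i. zres n ((f ^^ ns i) x) = zres n ((f ^^ a) x)) sequentially"
    proof (rule eventually_mono)
      fix i
      assume "k \<le> ns i \<and> int (ns i mod ?l) = zres ?l t"
      then show "zres n ((f ^^ ns i) x) = zres n ((f ^^ a) x)"
        using periodic[OF _ \<open>k \<le> a\<close>] a_mod t by simp
    qed
  qed
qed

lemma funpow_tendsto_common_limit:
  assumes cp: "congruence_preserving f"
  obtains L where "\<And>ns. filterlim ns at_top sequentially \<Longrightarrow> (\<lambda>i. zemb (ns i)) \<longlonglongrightarrow> t \<Longrightarrow>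
    (\<lambda>i. (f ^^ ns i) x) \<longlonglongrightarrow> L"
proof -
  have "\<forall>n. \<exists>r. 0 < n \<longrightarrow> (\<forall>ns. filterlim ns at_top sequentially \<longrightarrow>
      (\<lambda>i. zemb (ns i)) \<longlonglongrightarrow> t \<longrightarrow> eventually (\<lambda>i. zres n ((f ^^ ns i) x) = r) sequentially)"
    using zres_funpow_eventually_const[OF cp, of _ t] by metis
  then obtain r where r: "\<And>n ns. 0 < n \<Longrightarrow> filterlim ns at_top sequentially \<Longrightarrow>
      (\<lambda>i. zemb (ns i)) \<longlonglongrightarrow> t \<Longrightarrow> eventually (\<lambda>i. zres n ((f ^^ ns i) x) = r n) sequentially"
    by metis
  obtain c where c: "filterlim c at_top sequentially" "(\<lambda>i. zemb (c i)) \<longlonglongrightarrow> t"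
    using nat_seq_tendsto_zhat by blast
  obtain L where L: "\<forall>n>0. zres n L = r n"
    using ex_limit_of_eventual_residues[of "\<lambda>i. (f ^^ c i) x" r] r[OF _ c] by blast
  show thesis
  proof (rule that)
    fix ns
    assume ns: "filterlim ns at_top sequentially" "(\<lambda>i. zemb (ns i)) \<longlonglongrightarrow> t"
    show "(\<lambda>i. (f ^^ ns i) x) \<longlonglongrightarrow> L"
      unfolding tendsto_zhat_iff using r[OF _ ns] L by simp
  qed
qed

lemma tendsto_uparrow:
  assumes cp: "congruence_preserving f"
    and "filterlim ns at_top sequentially" "(\<lambda>i. zemb (ns i)) \<longlonglongrightarrow> t"
  shows "(\<lambda>i. (f ^^ ns i) x) \<longlonglongrightarrow> uparrow f x t"
proof -
  obtain L where lim: "\<And>ms. filterlim ms at_top sequentially \<Longrightarrow> (\<lambda>i. zemb (ms i)) \<longlonglongrightarrow> t \<Longrightarrow>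
      (\<lambda>i. (f ^^ ms i) x) \<longlonglongrightarrow> L"
    using funpow_tendsto_common_limit[OF cp] by blast
  obtain c where c: "\<And>i. 0 < c i" "filterlim c at_top sequentially" "(\<lambda>i. zemb (c i)) \<longlonglongrightarrow> t"
    using nat_seq_tendsto_zhat by blast
  have "uparrow f x t = L"
    unfolding uparrow_def
  proof (rule the_equality)
    fix L'
    assume "\<forall>ns. (\<forall>i. 0 < ns i) \<longrightarrow> filterlim ns at_top sequentially \<longrightarrow>
      (\<lambda>i. zemb (ns i)) \<longlonglongrightarrow> t \<longrightarrow> (\<lambda>i. (f ^^ ns i) x) \<longlonglongrightarrow> L'"
    then have "(\<lambda>i. (f ^^ c i) x) \<longlonglongrightarrow> L'"
      using c by blast
    then show "L' = L"
      using lim[OF c(2,3)] by (rule LIMSEQ_unique)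
  qed (use lim in blast)
  then show ?thesis
    using lim[OF assms(2,3)] by simp
qed

lemma zres_uparrow_cong:
  assumes cp: "congruence_preserving f" and n: "0 < n"
    and "zres (lambda_f f n) t1 = zres (lambda_f f n) t2"
  shows "zres n (uparrow f x t1) = zres n (uparrow f x t2)"
proof -
  obtain r where r: "\<And>ns t. filterlim ns at_top sequentially \<Longrightarrow> (\<lambda>i. zemb (ns i)) \<longlonglongrightarrow> t \<Longrightarrow>
      zres (lambda_f f n) t = zres (lambda_f f n) t1 \<Longrightarrow>
      eventually (\<lambda>i. zres n ((f ^^ ns i) x) = r) sequentially"
    using zres_funpow_eventually_const[OF cp n] by blast
  have residue: "zres n (uparrow f x t) = r"
    if "zres (lambda_f f n) t = zres (lambda_f f n) t1" for t
  proof -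
    obtain c where c: "filterlim c at_top sequentially" "(\<lambda>i. zemb (c i)) \<longlonglongrightarrow> t"
      using nat_seq_tendsto_zhat by blast
    have "eventually (\<lambda>i. zres n ((f ^^ c i) x) = zres n (uparrow f x t)) sequentially"
      using tendsto_uparrow[OF cp c] n unfolding tendsto_zhat_iff by blast
    from eventually_happens'[OF sequentially_bot eventually_conj[OF this r[OF c that]]]
    show ?thesis
      by auto
  qed
  show ?thesis
    using residue[of t1] residue[of t2] assms(3) by simp
qed

theorem proposition3p9:
  fixes f :: "zhat \<Rightarrow> zhat" and s :: zhat
  assumes "congruence_preserving f"
  shows "period_map (lambda_f f) (uparrow f s)"
  unfolding period_map_def
proof (intro conjI allI impI)
  fix n :: nat
  assume "0 < n"
  then show "0 < lambda_f f n"
    by (rule lambda_f_pos)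
next
  fix t1 t2 n
  assume n: "0 < n" and "zcong (lambda_f f n) t1 t2"
  then have "zres (lambda_f f n) t1 = zres (lambda_f f n) t2"
    using zcong_iff lambda_f_pos by blast
  then show "zcong n (uparrow f s t1) (uparrow f s t2)"
    using zres_uparrow_cong[OF assms n] zcong_iff[OF n] by blast
qed

end
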